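(* Let $k$ be a field and $d\in\mathbb{N}$. Consider the morphisms $$\mathrm{d}\beta_d:Q_d\times\mathcal{L}\mathbb{G}_m\times A_d\times\mathcal{L}\mathbb{A}^1\to Q_d\times\mathcal{L}\mathbb{G}_m\times\mathcal{L}\mathbb{A}^1,\quad (q,u,a,v)\mapsto(q,u,ua+qv),$$ $$\alpha_d:Q_d\times A_d\times\mathcal{L}\mathbb{A}^1\to Q_d\times\mathcal{L}\mathbb{A}^1,\quad (q,a,v)\mapsto(q,qv+a).$$ Both are surjective on $k$-points and induce formally smooth morphisms on formal completions at $k$-points. At $k$-points lying over $q=t^d$, they induce isomorphisms on formal completions.
   Context: $Q_d$ is the affine space of monic polynomials of degree $d$ in $R[t]$; $A_d$ is the $d$-dimensional affine space of polynomials of degree $<d$ in $R[t]$; $\mathcal{L}\mathbb{A}^1$ represents $R\mapsto R[[t]]$; $\mathcal{L}\mathbb{G}_m$ represents $R\mapsto R[[t]]^\times$. Formal smoothness refers to the infinitesimal lifting property for Artinian local $k$-algebras. *)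

theory Defs
  imports "HOL-Computational_Algebra.Computational_Algebra"
begin

definition is_rhom :: "('a::comm_ring_1 \<Rightarrow> 'b::comm_ring_1) \<Rightarrow> bool" where
  "is_rhom f \<longleftrightarrow> f 1 = 1 \<and> (\<forall>x y. f (x + y) = f x + f y) \<and> (\<forall>x y. f (x * y) = f x * f y)"

definition is_ideal :: "'a::comm_ring_1 set \<Rightarrow> bool" where
  "is_ideal I \<longleftrightarrow> 0 \<in> I \<and> (\<forall>x\<in>I. \<forall>y\<in>I. x + y \<in> I) \<and> (\<forall>x\<in>I. \<forall>r. r * x \<in> I)"

definition artinian :: "'a::comm_ring_1 itself \<Rightarrow> bool" where
  "artinian _ \<longleftrightarrow> (\<forall>I :: nat \<Rightarrow> 'a set. (\<forall>n. is_ideal (I n) \<and> I (Suc n) \<subseteq> I n)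
       \<longrightarrow> (\<exists>N. \<forall>n\<ge>N. I n = I N))"

text \<open>A k-algebra (structure map phi) which is Artinian and local with residue field k,
  the residue map being pi: the non-units are exactly the kernel of pi (so R is local with
  maximal ideal ker pi) and pi o phi = id (so R / ker pi = k).\<close>
definition art_k :: "('k::field \<Rightarrow> 'r::comm_ring_1) \<Rightarrow> ('r \<Rightarrow> 'k) \<Rightarrow> bool" where
  "art_k \<phi> \<pi> \<longleftrightarrow> is_rhom \<phi> \<and> is_rhom \<pi> \<and> (\<forall>c. \<pi> (\<phi> c) = c)
      \<and> (\<forall>x. x dvd 1 \<longleftrightarrow> \<pi> x \<noteq> 0) \<and> artinian TYPE('r)"

definition art_hom :: "('k::field \<Rightarrow> 'r::comm_ring_1) \<Rightarrow> ('r \<Rightarrow> 'k) \<Rightarrow> ('k \<Rightarrow> 's::comm_ring_1)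
     \<Rightarrow> ('s \<Rightarrow> 'k) \<Rightarrow> ('r \<Rightarrow> 's) \<Rightarrow> bool" where
  "art_hom \<phi> \<pi> \<phi>' \<pi>' g \<longleftrightarrow> is_rhom g \<and> (\<forall>c. g (\<phi> c) = \<phi>' c) \<and> (\<forall>x. \<pi>' (g x) = \<pi> x)"

definition fps_map :: "('a \<Rightarrow> 'b) \<Rightarrow> 'a fps \<Rightarrow> 'b fps" where
  "fps_map g f = Abs_fps (\<lambda>n. g (fps_nth f n))"

definition Qd :: "nat \<Rightarrow> 'a::comm_ring_1 poly set" where
  "Qd d = {q. degree q = d \<and> lead_coeff q = 1}"

definition Ad :: "nat \<Rightarrow> 'a::comm_ring_1 poly set" where
  "Ad d = {a. \<forall>i\<ge>d. coeff a i = 0}"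

text \<open>LG_m(R) = R[[t]]^x ; LA^1(R) = R[[t]] (all of 'a fps).\<close>
definition LGm :: "'a::comm_ring_1 fps set" where
  "LGm = {u. u dvd 1}"

definition dbeta_src :: "nat \<Rightarrow> ('a::comm_ring_1 poly \<times> 'a fps \<times> 'a poly \<times> 'a fps) set" where
  "dbeta_src d = Qd d \<times> LGm \<times> Ad d \<times> UNIV"

definition dbeta_tgt :: "nat \<Rightarrow> ('a::comm_ring_1 poly \<times> 'a fps \<times> 'a fps) set" where
  "dbeta_tgt d = Qd d \<times> LGm \<times> UNIV"

definition dbeta :: "'a::comm_ring_1 poly \<times> 'a fps \<times> 'a poly \<times> 'a fps \<Rightarrow> 'a poly \<times> 'a fps \<times> 'a fps" where
  "dbeta x = (case x of (q, u, a, v) \<Rightarrow> (q, u, u * fps_of_poly a + fps_of_poly q * v))"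

definition alpha_src :: "nat \<Rightarrow> ('a::comm_ring_1 poly \<times> 'a poly \<times> 'a fps) set" where
  "alpha_src d = Qd d \<times> Ad d \<times> UNIV"

definition alpha_tgt :: "nat \<Rightarrow> ('a::comm_ring_1 poly \<times> 'a fps) set" where
  "alpha_tgt d = Qd d \<times> UNIV"

definition alpha :: "'a::comm_ring_1 poly \<times> 'a poly \<times> 'a fps \<Rightarrow> 'a poly \<times> 'a fps" where
  "alpha x = (case x of (q, a, v) \<Rightarrow> (q, fps_of_poly q * v + fps_of_poly a))"

definition bc_dbeta_src :: "('a::comm_ring_1 \<Rightarrow> 'b::comm_ring_1) \<Rightarrow> 'a poly \<times> 'a fps \<times> 'a poly \<times> 'a fps
    \<Rightarrow> 'b poly \<times> 'b fps \<times> 'b poly \<times> 'b fps" where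
  "bc_dbeta_src g x = (case x of (q, u, a, v) \<Rightarrow> (map_poly g q, fps_map g u, map_poly g a, fps_map g v))"

definition bc_dbeta_tgt :: "('a::comm_ring_1 \<Rightarrow> 'b::comm_ring_1) \<Rightarrow> 'a poly \<times> 'a fps \<times> 'a fps
    \<Rightarrow> 'b poly \<times> 'b fps \<times> 'b fps" where
  "bc_dbeta_tgt g x = (case x of (q, u, w) \<Rightarrow> (map_poly g q, fps_map g u, fps_map g w))"

definition bc_alpha_src :: "('a::comm_ring_1 \<Rightarrow> 'b::comm_ring_1) \<Rightarrow> 'a poly \<times> 'a poly \<times> 'a fps
    \<Rightarrow> 'b poly \<times> 'b poly \<times> 'b fps" where
  "bc_alpha_src g x = (case x of (q, a, v) \<Rightarrow> (map_poly g q, map_poly g a, fps_map g v))"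

definition bc_alpha_tgt :: "('a::comm_ring_1 \<Rightarrow> 'b::comm_ring_1) \<Rightarrow> 'a poly \<times> 'a fps
    \<Rightarrow> 'b poly \<times> 'b fps" where
  "bc_alpha_tgt g x = (case x of (q, w) \<Rightarrow> (map_poly g q, fps_map g w))"

text \<open>Given a surjection g : R -> R' of Artinian local k-algebras with residue maps,
  SR, SR' are the source points over R, R'; TR the target points over R;
  redS, redS' reduce source points to k-points, redT reduces target points over R;
  bS, bT base change along g; fR, fR', fk the morphism on R-, R'-, k-points.
  Condition: every R'-point y' of the source completion at x together with an R-point z of the
  target completion at f(x) with f(y') = g(z) lifts to an R-point y of the source completion
  at x with g(y) = y' and f(y) = z.\<close>
definition lifts where
  "lifts SR SR' TR redS redS' redT bS bT fR fR' fk x \<longleftrightarrow>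
     (\<forall>y'\<in>SR'. \<forall>z\<in>TR. redS' y' = x \<longrightarrow> redT z = fk x \<longrightarrow> fR' y' = bT z \<longrightarrow>
        (\<exists>y\<in>SR. redS y = x \<and> bS y = y' \<and> fR y = z))"

end

theory Submission
  imports Defs
begin

text \<open>Everything reduces to division by a monic polynomial q of degree d in R[[t]], for a ring R
  whose non-units are nilpotent (a field, or an Artinian local k-algebra). Below the first unit
  coefficient of q all coefficients are nilpotent, so q divides a power t^N in R[[t]]; dividing
  the truncation of w below t^N by q in R[t] writes w = q v + a with deg a < d. Since this
  construction sends series with coefficients in the kernel of a ring map to such series, a point
  over a quotient of R lifts, which is formal smoothness. If q reduces to t^d, then q is t^d plus
  a nilpotent polynomial and divides some t^(d n) already in R[t]; this turns a + q v = 0 into a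
  polynomial identity, so the decomposition is unique and the maps are bijective on completions.\<close>

definition nilpotent :: "'a::comm_ring_1 \<Rightarrow> bool" where
  "nilpotent x \<longleftrightarrow> (\<exists>n. x ^ n = 0)"

definition nonunits_nilpotent :: "'a::comm_ring_1 itself \<Rightarrow> bool" where
  "nonunits_nilpotent _ \<longleftrightarrow> (\<forall>x::'a. \<not> x dvd 1 \<longrightarrow> nilpotent x)"

definition distinguished_poly :: "nat \<Rightarrow> 'a::comm_ring_1 poly set" where
  "distinguished_poly d = {q \<in> Qd d. \<forall>i<d. nilpotent (coeff q i)}"

lemma rhom_add: "is_rhom f \<Longrightarrow> f (x + y) = f x + f y"
  unfolding is_rhom_def by blast

lemma rhom_mult: "is_rhom f \<Longrightarrow> f (x * y) = f x * f y"
  unfolding is_rhom_def by blast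

lemma rhom_1: "is_rhom f \<Longrightarrow> f 1 = 1"
  unfolding is_rhom_def by blast

lemma rhom_0: "is_rhom f \<Longrightarrow> f 0 = 0"
  using rhom_add[of f 0 0] by simp

lemma rhom_diff: "is_rhom f \<Longrightarrow> f (x - y) = f x - f y"
  using rhom_add[of f "x - y" y] by (simp add: eq_diff_eq)

lemma rhom_sum: "is_rhom f \<Longrightarrow> f (sum h A) = (\<Sum>i\<in>A. f (h i))"
  by (induction A rule: infinite_finite_induct) (simp_all add: rhom_0 rhom_add)

lemma rhom_id: "is_rhom id"
  unfolding is_rhom_def by simp

lemma fps_map_nth [simp]: "fps_map g f $ n = g (f $ n)"
  unfolding fps_map_def by simp

lemma fps_map_add: "is_rhom g \<Longrightarrow> fps_map g (a + b) = fps_map g a + fps_map g b"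
  by (rule fps_ext) (simp add: rhom_add)

lemma fps_map_diff: "is_rhom g \<Longrightarrow> fps_map g (a - b) = fps_map g a - fps_map g b"
  by (rule fps_ext) (simp add: rhom_diff)

lemma fps_map_mult: "is_rhom g \<Longrightarrow> fps_map g (a * b) = fps_map g a * fps_map g b"
  by (rule fps_ext) (simp add: fps_mult_nth rhom_sum rhom_mult)

lemma fps_map_1: "is_rhom g \<Longrightarrow> fps_map g 1 = 1"
  by (rule fps_ext) (simp add: rhom_0 rhom_1)

lemma fps_map_unit: "is_rhom g \<Longrightarrow> u dvd 1 \<Longrightarrow> fps_map g u dvd 1"
  by (metis dvdE dvdI fps_map_1 fps_map_mult)

lemma fps_map_fps_of_poly: "g 0 = 0 \<Longrightarrow> fps_map g (fps_of_poly p) = fps_of_poly (map_poly g p)"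
  by (rule fps_ext) (simp add: coeff_map_poly)

lemma fps_map_comp: "fps_map f (fps_map g a) = fps_map (f \<circ> g) a"
  by (rule fps_ext) simp

lemma fps_map_fps_shift: "fps_map g (fps_shift n f) = fps_shift n (fps_map g f)"
  by (rule fps_ext) simp

lemma map_poly_truncate_fps: "g 0 = 0 \<Longrightarrow> map_poly g (truncate_fps n f) = truncate_fps n (fps_map g f)"
  by (rule poly_eqI) (simp add: coeff_map_poly coeff_truncate_fps)

lemma map_poly_add: "is_rhom g \<Longrightarrow> map_poly g (p + q) = map_poly g p + map_poly g q"
  by (rule poly_eqI) (simp add: coeff_map_poly rhom_0 rhom_add)

lemma map_poly_mult: "is_rhom g \<Longrightarrow> map_poly g (p * q) = map_poly g p * map_poly g q"
  by (rule poly_eqI) (simp add: coeff_map_poly coeff_mult rhom_0 rhom_sum rhom_mult)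

lemma map_poly_Ad: "g 0 = 0 \<Longrightarrow> a \<in> Ad d \<Longrightarrow> map_poly g a \<in> Ad d"
  by (simp add: Ad_def coeff_map_poly)

lemma map_poly_surj_Ad:
  assumes "surj g" "g 0 = 0" "a' \<in> Ad d"
  shows "\<exists>a \<in> Ad d. map_poly g a = a'"
proof -
  define h where "h s = (if s = 0 then 0 else inv g s)" for s
  have "g (h s) = s" for s
    using assms by (simp add: h_def surj_f_inv_f)
  then have "map_poly g (map_poly h a') = a'"
    by (intro poly_eqI) (simp add: coeff_map_poly h_def assms(2))
  moreover have "map_poly h a' \<in> Ad d"
    by (rule map_poly_Ad[OF _ assms(3)]) (simp add: h_def)
  ultimately show ?thesis by blast
qed

lemma fps_map_surj: "surj g \<Longrightarrow> \<exists>v. fps_map g v = v'"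
  by (metis fps_ext fps_map_nth surj_f_inv_f)

lemma nilpotent_0: "nilpotent 0"
  unfolding nilpotent_def by (rule exI[of _ 1]) simp

lemma nilpotent_mult: "nilpotent x \<Longrightarrow> nilpotent (x * y)"
  unfolding nilpotent_def by (metis mult_zero_left power_mult_distrib)

lemma nilpotent_add:
  assumes "nilpotent x" "nilpotent y"
  shows "nilpotent (x + y)"
proof -
  obtain m n where x: "x ^ m = 0" and y: "y ^ n = 0"
    using assms unfolding nilpotent_def by blast
  have "of_nat (m + n choose k) * x ^ k * y ^ (m + n - k) = 0" for k
  proof (cases "m \<le> k")
    case True
    then have "x ^ k = x ^ m * x ^ (k - m)" by (simp flip: power_add)
    then show ?thesis using x by simp
  next
    case False
    then have "m + n - k = n + (m - k)" by simp
    then have "y ^ (m + n - k) = y ^ n * y ^ (m - k)" by (simp only: power_add)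
    then show ?thesis using y by simp
  qed
  then have "(x + y) ^ (m + n) = 0"
    unfolding binomial_ring by (simp only: sum.neutral_const)
  then show ?thesis unfolding nilpotent_def by blast
qed
lemma nilpotent_sum: "(\<And>i. i \<in> A \<Longrightarrow> nilpotent (f i)) \<Longrightarrow> nilpotent (sum f A)"
proof (induction A rule: infinite_finite_induct)
  case (insert i A)
  then show ?case by (simp add: nilpotent_add)
qed (simp_all add: nilpotent_0)
lemma nilpotent_fps_of_poly: "nilpotent p \<Longrightarrow> nilpotent (fps_of_poly p)"
  unfolding nilpotent_def by (metis fps_of_poly_0 fps_of_poly_power)

lemma nilpotent_poly_cutoff:
  assumes "\<And>i. i < m \<Longrightarrow> nilpotent (coeff p i)"
  shows "nilpotent (poly_cutoff m p)"
proof -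
  have "poly_cutoff m p = (\<Sum>i<m. monom (coeff p i) i)"
    by (rule poly_eqI) (simp add: coeff_poly_cutoff coeff_sum)
  moreover have "nilpotent (monom (coeff p i) i)" if "i < m" for i
    using assms[OF that] by (auto simp: nilpotent_def monom_power)
  ultimately show ?thesis by (auto intro: nilpotent_sum)
qed
lemma dvd_power_if_dvd_add_nilpotent:
  fixes x e f :: "'a::comm_ring_1"
  assumes "f dvd x + e" "nilpotent e"
  shows "\<exists>n. f dvd x ^ n"
proof -
  have "nilpotent (- e)" using nilpotent_mult[OF assms(2), of "- 1"] by simp
  then obtain n where "(- e) ^ n = 0" unfolding nilpotent_def by blast
  then have "x ^ n = (x + e) * (\<Sum>i<n. (- e) ^ (n - Suc i) * x ^ i)"
    using power_diff_sumr2[of x n "- e"] by (simp only: diff_zero diff_minus_eq_add)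
  then have "x + e dvd x ^ n" by (simp only: dvd_triv_left)
  then show ?thesis using dvd_trans[OF assms(1)] by blast
qed

lemma art_k_rhom: "art_k \<phi> \<pi> \<Longrightarrow> is_rhom \<pi>"
  by (simp add: art_k_def)

lemma art_k_residue_zero_nilpotent:
  assumes A: "art_k (\<phi> :: 'k::field \<Rightarrow> 'r::comm_ring_1) \<pi>" and x: "\<pi> x = 0"
  shows "nilpotent x"
proof -
  \<comment> \<open>The chain of ideals x^n R stabilises, so x^N = x^(N+1) r; as 1 - x r reduces to 1 it is a
    unit, and x^N (1 - x r) = 0 gives x^N = 0.\<close>
  define I where "I n = range (\<lambda>r. x ^ n * r)" for n
  have "is_ideal (I n) \<and> I (Suc n) \<subseteq> I n" for n
  proof
    have "x ^ n * r + x ^ n * s \<in> I n" "c * (x ^ n * r) \<in> I n" for r s c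
      unfolding I_def by (metis distrib_left rangeI, metis mult.left_commute rangeI)
    moreover have "0 \<in> I n"
      unfolding I_def by (metis mult_zero_right rangeI)
    ultimately show "is_ideal (I n)"
      unfolding is_ideal_def I_def by blast
    have "x ^ Suc n * r \<in> I n" for r
      unfolding I_def by (metis mult.assoc power_Suc2 rangeI)
    then show "I (Suc n) \<subseteq> I n"
      unfolding I_def by blast
  qed
  moreover have "artinian TYPE('r)" using A unfolding art_k_def by blast
  ultimately obtain N where N: "\<And>n. n \<ge> N \<Longrightarrow> I n = I N" unfolding artinian_def by blast
  have "I (Suc N) = I N" by (rule N) simp
  moreover have "x ^ N \<in> I N" unfolding I_def by (auto intro: range_eqI[of _ _ 1])
  ultimately obtain r where r: "x ^ N = x ^ Suc N * r" unfolding I_def by auto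
  have "\<pi> (1 - x * r) = 1"
    using A x unfolding art_k_def by (simp add: rhom_diff rhom_mult rhom_1)
  then have "(1 - x * r) dvd 1" using A unfolding art_k_def by simp
  then obtain c where c: "1 = (1 - x * r) * c" by (rule dvdE)
  have "x ^ N * (1 - x * r) = 0"
    using r by (simp add: algebra_simps)
  then have "x ^ N * (1 - x * r) * c = 0" by simp
  then have "x ^ N = 0" by (simp add: mult.assoc flip: c)
  then show ?thesis unfolding nilpotent_def by blast
qed

lemma art_k_nonunits_nilpotent:
  assumes "art_k (\<phi> :: 'k::field \<Rightarrow> 'r::comm_ring_1) \<pi>"
  shows "nonunits_nilpotent TYPE('r)"
  unfolding nonunits_nilpotent_def
proof (intro allI impI)
  fix x :: 'r
  assume "\<not> x dvd 1"
  then have "\<pi> x = 0" using assms unfolding art_k_def by blast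
  then show "nilpotent x" using assms by (rule art_k_residue_zero_nilpotent[rotated])
qed

lemma field_nonunits_nilpotent: "nonunits_nilpotent TYPE('k::field)"
  unfolding nonunits_nilpotent_def by (simp add: dvd_field_iff nilpotent_0)

lemma monic_poly_division:
  assumes "q \<in> Qd d"
  shows "\<exists>s r. p = q * s + r \<and> r \<in> Ad d"
proof -
  have q: "degree q = d" "lead_coeff q = 1" using assms by (auto simp: Qd_def)
  then have "q \<noteq> 0" by auto
  obtain s r where sr: "pseudo_divmod p q = (s, r)" by fastforce
  from pseudo_divmod[OF \<open>q \<noteq> 0\<close> sr] q have "p = q * s + r" "r = 0 \<or> degree r < d"
    by simp_all
  moreover from this(2) have "r \<in> Ad d" by (auto simp: Ad_def coeff_eq_0)
  ultimately show ?thesis by blast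
qed

lemma monic_poly_division_unique:
  assumes "degree q \<le> d" "coeff q d = 1" "r \<in> Ad d" "q * s + r = 0"
  shows "s = 0"
proof (rule ccontr)
  assume "s \<noteq> 0"
  have "degree q = d" using assms(1,2) by (simp add: le_antisym le_degree)
  then have "coeff (q * s) (d + degree s) = lead_coeff s"
    using coeff_mult_degree_sum[of q s] assms(2) by simp
  moreover have "coeff r (d + degree s) = 0" using assms(3) by (simp add: Ad_def)
  moreover have "coeff (q * s + r) (d + degree s) = 0" using assms(4) by simp
  ultimately have "lead_coeff s = 0" by simp
  with \<open>s \<noteq> 0\<close> show False by simp
qed

lemma Qd_eq_monom_add_poly_cutoff: "q \<in> Qd d \<Longrightarrow> q = monom 1 d + poly_cutoff d q"
  by (rule poly_eqI) (auto simp: Qd_def coeff_monom coeff_poly_cutoff coeff_eq_0)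

lemma monic_dvd_fps_X_power:
  fixes q :: "'a::comm_ring_1 poly"
  assumes nu: "nonunits_nilpotent TYPE('a)" and q: "q \<in> Qd d"
  shows "\<exists>N. fps_of_poly q dvd fps_X ^ N"
proof -
  define m where "m = (LEAST i. coeff q i dvd 1)"
  have "coeff q d dvd 1" using q by (auto simp: Qd_def)
  then have "coeff q m dvd 1" unfolding m_def by (rule LeastI)
  then obtain y where y: "coeff q m * y = 1" by (metis dvdE)
  define U where "U = fps_shift m (fps_of_poly q)"
  define E where "E = fps_of_poly (poly_cutoff m q)"
  define V where "V = fps_right_inverse U y"
  have UV: "U * V = 1" unfolding V_def by (rule fps_right_inverse) (simp add: U_def y)
  have "fps_X ^ m * U + E = fps_of_poly q"
    using fps_shift_cutoff'[of m "fps_of_poly q"] by (simp add: U_def E_def)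
  then have "fps_of_poly q * V = fps_X ^ m * (U * V) + E * V"
    by (simp add: algebra_simps flip: \<open>fps_X ^ m * U + E = fps_of_poly q\<close>)
  then have "fps_of_poly q dvd fps_X ^ m + E * V" by (metis UV mult_1_right dvd_triv_left)
  moreover have "nilpotent (coeff q i)" if "i < m" for i
    using nu not_less_Least[OF that[unfolded m_def]] unfolding nonunits_nilpotent_def by blast
  then have "nilpotent (E * V)"
    unfolding E_def by (intro nilpotent_mult nilpotent_fps_of_poly nilpotent_poly_cutoff)
  ultimately obtain n where "fps_of_poly q dvd (fps_X ^ m) ^ n"
    using dvd_power_if_dvd_add_nilpotent by blast
  then show ?thesis by (auto simp flip: power_mult)
qed

lemma distinguished_poly_dvd_monom:
  assumes "q \<in> distinguished_poly d"
  shows "\<exists>n. q dvd monom 1 (d * n)"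
proof -
  have "q dvd monom 1 d + poly_cutoff d q"
    using assms by (simp add: distinguished_poly_def flip: Qd_eq_monom_add_poly_cutoff)
  moreover have "nilpotent (poly_cutoff d q)"
    using assms by (simp add: distinguished_poly_def nilpotent_poly_cutoff)
  ultimately obtain n where "q dvd monom 1 d ^ n"
    using dvd_power_if_dvd_add_nilpotent by blast
  then show ?thesis by (auto simp: monom_power)
qed

lemma fps_monic_division:
  fixes q :: "'a::comm_ring_1 poly" and g :: "'a \<Rightarrow> 'b::comm_ring_1"
  assumes nu: "nonunits_nilpotent TYPE('a)" and q: "q \<in> Qd d" and g: "is_rhom g"
  shows "\<exists>v a. a \<in> Ad d \<and> w = fps_of_poly q * v + fps_of_poly a
           \<and> (fps_map g w = 0 \<longrightarrow> fps_map g v = 0 \<and> map_poly g a = 0)"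
proof -
  obtain N X where X: "fps_X ^ N = fps_of_poly q * X"
    using monic_dvd_fps_X_power[OF nu q] by (auto elim: dvdE)
  obtain s a where sa: "truncate_fps N w = q * s + a" and a: "a \<in> Ad d"
    using monic_poly_division[OF q] by blast
  define v where "v = X * fps_shift N w + fps_of_poly s"
  have "w = fps_X ^ N * fps_shift N w + fps_of_poly (truncate_fps N w)"
    using fps_shift_cutoff'[of N w] by simp
  also have "\<dots> = fps_of_poly q * v + fps_of_poly a"
    by (simp add: X sa v_def fps_of_poly_add fps_of_poly_mult algebra_simps)
  finally have w: "w = fps_of_poly q * v + fps_of_poly a" .
  have "fps_map g v = 0 \<and> map_poly g a = 0" if w0: "fps_map g w = 0"
  proof -
    have g0: "g 0 = 0" using g by (rule rhom_0)
    have "map_poly g q * map_poly g s + map_poly g a = map_poly g (truncate_fps N w)"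
      by (simp add: sa g map_poly_add map_poly_mult)
    also have "\<dots> = 0" by (simp add: map_poly_truncate_fps g0 w0)
    finally have e: "map_poly g q * map_poly g s + map_poly g a = 0" .
    have "map_poly g s = 0"
    proof (rule monic_poly_division_unique[OF _ _ _ e])
      show "degree (map_poly g q) \<le> d"
        using q map_poly_degree_leq[of g q] by (simp add: Qd_def)
      show "coeff (map_poly g q) d = 1"
        using q g by (auto simp: Qd_def coeff_map_poly g0 rhom_1)
      show "map_poly g a \<in> Ad d" using g0 a by (rule map_poly_Ad)
    qed
    with e have "map_poly g a = 0" by simp
    moreover have "fps_map g v = 0" using \<open>map_poly g s = 0\<close>
      by (simp add: v_def g g0 fps_map_add fps_map_mult fps_map_fps_shift fps_map_fps_of_poly w0)
    ultimately show ?thesis by blast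
  qed
  with w a show ?thesis by blast
qed

lemma fps_unit_monic_division:
  fixes q :: "'a::comm_ring_1 poly" and g :: "'a \<Rightarrow> 'b::comm_ring_1"
  assumes nu: "nonunits_nilpotent TYPE('a)" and q: "q \<in> Qd d" and u: "u dvd 1"
    and g: "is_rhom g"
  shows "\<exists>a v. a \<in> Ad d \<and> w = u * fps_of_poly a + fps_of_poly q * v
           \<and> (fps_map g w = 0 \<longrightarrow> map_poly g a = 0 \<and> fps_map g v = 0)"
proof -
  obtain u' where u': "1 = u * u'" using u by (rule dvdE)
  obtain v a where a: "a \<in> Ad d" and e: "u' * w = fps_of_poly q * v + fps_of_poly a"
    and ker: "fps_map g (u' * w) = 0 \<longrightarrow> fps_map g v = 0 \<and> map_poly g a = 0"
    using fps_monic_division[OF nu q g] by blast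
  have "w = u * (u' * w)" by (simp add: mult.assoc[symmetric] flip: u')
  also have "\<dots> = u * fps_of_poly a + fps_of_poly q * (u * v)" by (simp add: e algebra_simps)
  finally have "w = u * fps_of_poly a + fps_of_poly q * (u * v)" .
  moreover have "map_poly g a = 0 \<and> fps_map g (u * v) = 0" if "fps_map g w = 0"
    using ker that g by (simp add: fps_map_mult)
  ultimately show ?thesis using a by blast
qed

lemma fps_unit_monic_division_lift:
  fixes g :: "'a::comm_ring_1 \<Rightarrow> 'b::comm_ring_1"
  assumes nu: "nonunits_nilpotent TYPE('a)" and g: "is_rhom g" "surj g"
    and q: "q \<in> Qd d" and u: "u dvd 1" and a': "a' \<in> Ad d"
    and w: "fps_map g w = fps_map g u * fps_of_poly a' + fps_of_poly (map_poly g q) * v'"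
  shows "\<exists>a v. a \<in> Ad d \<and> map_poly g a = a' \<and> fps_map g v = v'
           \<and> w = u * fps_of_poly a + fps_of_poly q * v"
proof -
  have g0: "g 0 = 0" using g(1) by (rule rhom_0)
  obtain a0 where a0: "a0 \<in> Ad d" "map_poly g a0 = a'"
    using map_poly_surj_Ad[OF g(2) g0 a'] by blast
  obtain v0 where v0: "fps_map g v0 = v'" using fps_map_surj[OF g(2)] by blast
  define r where "r = w - (u * fps_of_poly a0 + fps_of_poly q * v0)"
  have "fps_map g r = 0"
    using w by (simp add: r_def g g0 a0 v0 fps_map_diff fps_map_add fps_map_mult fps_map_fps_of_poly)
  then obtain a1 v1 where a1: "a1 \<in> Ad d" "map_poly g a1 = 0" and v1: "fps_map g v1 = 0"
    and r: "r = u * fps_of_poly a1 + fps_of_poly q * v1"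
    using fps_unit_monic_division[OF nu q u g(1), of r] by blast
  have "w = u * fps_of_poly (a0 + a1) + fps_of_poly q * (v0 + v1)"
    using r by (simp add: r_def fps_of_poly_add algebra_simps)
  moreover have "a0 + a1 \<in> Ad d" using a0 a1 by (simp add: Ad_def)
  moreover have "map_poly g (a0 + a1) = a'" by (simp add: g map_poly_add a0 a1)
  moreover have "fps_map g (v0 + v1) = v'" by (simp add: g fps_map_add v0 v1)
  ultimately show ?thesis by blast
qed

lemma distinguished_division_unique:
  assumes q: "q \<in> distinguished_poly d" and a: "a \<in> Ad d"
    and e: "fps_of_poly a + fps_of_poly q * v = 0"
  shows "a = 0 \<and> v = 0"
proof -
  obtain n Y where Y: "monom 1 (d * n) = q * Y"
    using distinguished_poly_dvd_monom[OF q] by (auto elim: dvdE)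
  have "fps_of_poly q * v = - fps_of_poly a" using e by (simp add: eq_neg_iff_add_eq_0 add.commute)
  moreover have "v * fps_X ^ (d * n) = fps_of_poly Y * (fps_of_poly q * v)"
    by (simp add: Y fps_of_poly_mult mult_ac flip: fps_of_poly_monom')
  ultimately have "v * fps_X ^ (d * n) = - fps_of_poly (Y * a)"
    by (simp add: fps_of_poly_mult)
  then have v: "v = fps_of_poly (poly_shift (d * n) (- (Y * a)))"
    by (metis fps_of_poly_shift fps_of_poly_uminus fps_shift_times_fps_X_power')
  define s where "s = poly_shift (d * n) (- (Y * a))"
  have "fps_of_poly (q * s + a) = 0"
    using e by (simp add: v s_def fps_of_poly_add fps_of_poly_mult add.commute)
  then have "q * s + a = 0" using fps_of_poly_eq_iff[of _ 0] by simp
  moreover have "degree q \<le> d" "coeff q d = 1"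
    using q by (auto simp: distinguished_poly_def Qd_def)
  ultimately have "s = 0" using a monic_poly_division_unique by blast
  with \<open>q * s + a = 0\<close> v show ?thesis by (simp add: s_def)
qed

lemma fps_unit_distinguished_division_unique:
  assumes q: "q \<in> distinguished_poly d" and u: "u dvd 1" and a: "a1 \<in> Ad d" "a2 \<in> Ad d"
    and e: "u * fps_of_poly a1 + fps_of_poly q * v1 = u * fps_of_poly a2 + fps_of_poly q * v2"
  shows "a1 = a2 \<and> v1 = v2"
proof -
  obtain u' where u': "u' * u = 1" using u by (metis dvdE mult.commute)
  have "u * fps_of_poly (a1 - a2) + fps_of_poly q * (v1 - v2) = 0"
    using e by (simp add: fps_of_poly_diff algebra_simps)
  then have "u' * (u * fps_of_poly (a1 - a2) + fps_of_poly q * (v1 - v2)) = 0" by simp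
  moreover have "u' * (u * A + B * C) = (u' * u) * A + B * (u' * C)" for A B C :: "'a fps"
    by (simp add: algebra_simps)
  ultimately have "fps_of_poly (a1 - a2) + fps_of_poly q * (u' * (v1 - v2)) = 0"
    by (simp add: u')
  then have "a1 - a2 = 0 \<and> u' * (v1 - v2) = 0"
    using a by (intro distinguished_division_unique[OF q]) (simp_all add: Ad_def)
  moreover have "v1 - v2 = u * (u' * (v1 - v2))" by (simp add: mult.assoc[symmetric] u' mult.commute[of u])
  ultimately show ?thesis by simp
qed

lemma art_k_distinguished_poly:
  assumes A: "art_k (\<phi> :: 'k::field \<Rightarrow> 'r::comm_ring_1) \<pi>" and q: "q \<in> Qd d"
    and red: "map_poly \<pi> q = monom 1 d"
  shows "q \<in> distinguished_poly d"
proof -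
  have "\<pi> (coeff q i) = 0" if "i < d" for i
    using arg_cong[OF red, of "\<lambda>p. coeff p i"] that
    by (simp add: coeff_map_poly rhom_0[OF art_k_rhom[OF A]])
  then show ?thesis
    using q art_k_residue_zero_nilpotent[OF A] by (simp add: distinguished_poly_def)
qed

lemma monom_1_distinguished_poly: "monom 1 d \<in> distinguished_poly d"
  by (simp add: distinguished_poly_def Qd_def degree_monom_eq nilpotent_0)

lemma liftsI:
  assumes "\<And>y' z. y' \<in> SR' \<Longrightarrow> z \<in> TR \<Longrightarrow> fR' y' = bT z
      \<Longrightarrow> \<exists>y\<in>SR. bS y = y' \<and> fR y = z"
    and "\<And>y. y \<in> SR \<Longrightarrow> redS y = redS' (bS y)"
  shows "lifts SR SR' TR redS redS' redT bS bT fR fR' fk x"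
  unfolding lifts_def using assms by metis

lemma bij_betw_fibres:
  assumes "f ` S \<subseteq> T" "T \<subseteq> f ` S"
    and "\<And>y. y \<in> S \<Longrightarrow> rT (f y) = f0 (rS y)"
    and "inj_on f {y \<in> S. rS y = x}"
    and "\<And>y. y \<in> S \<Longrightarrow> f0 (rS y) = f0 x \<Longrightarrow> rS y = x"
  shows "bij_betw f {y \<in> S. rS y = x} {z \<in> T. rT z = f0 x}"
  unfolding bij_betw_def
proof
  show "inj_on f {y \<in> S. rS y = x}" by fact
  show "f ` {y \<in> S. rS y = x} = {z \<in> T. rT z = f0 x}"
    using assms(1,2,3,5) by (auto simp: image_iff)
qed

lemma fst_dbeta [simp]: "fst (dbeta y) = fst y"
  by (cases y) (simp add: dbeta_def)

lemma fst_alpha [simp]: "fst (alpha y) = fst y"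
  by (cases y) (simp add: alpha_def)

lemma bc_dbeta_tgt_dbeta: "is_rhom g \<Longrightarrow> bc_dbeta_tgt g (dbeta y) = dbeta (bc_dbeta_src g y)"
  by (cases y) (simp add: bc_dbeta_tgt_def dbeta_def bc_dbeta_src_def fps_map_add fps_map_mult
      fps_map_fps_of_poly rhom_0)

lemma bc_alpha_tgt_alpha: "is_rhom g \<Longrightarrow> bc_alpha_tgt g (alpha y) = alpha (bc_alpha_src g y)"
  by (cases y) (simp add: bc_alpha_tgt_def alpha_def bc_alpha_src_def fps_map_add fps_map_mult
      fps_map_fps_of_poly rhom_0)

lemma bc_dbeta_src_comp:
  "f 0 = 0 \<Longrightarrow> g 0 = 0 \<Longrightarrow> bc_dbeta_src f (bc_dbeta_src g y) = bc_dbeta_src (f \<circ> g) y"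
  by (cases y) (simp add: bc_dbeta_src_def map_poly_map_poly fps_map_comp)

lemma bc_alpha_src_comp:
  "f 0 = 0 \<Longrightarrow> g 0 = 0 \<Longrightarrow> bc_alpha_src f (bc_alpha_src g y) = bc_alpha_src (f \<circ> g) y"
  by (cases y) (simp add: bc_alpha_src_def map_poly_map_poly fps_map_comp)

lemma dbeta_image_subset: "dbeta ` dbeta_src d \<subseteq> dbeta_tgt d"
  by (auto simp: dbeta_def dbeta_src_def dbeta_tgt_def)

lemma alpha_image_subset: "alpha ` alpha_src d \<subseteq> alpha_tgt d"
  by (auto simp: alpha_def alpha_src_def alpha_tgt_def)

lemma dbeta_tgt_subset_image:
  assumes "nonunits_nilpotent TYPE('a::comm_ring_1)"
  shows "(dbeta_tgt d :: ('a poly \<times> 'a fps \<times> 'a fps) set) \<subseteq> dbeta ` dbeta_src d"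
proof
  fix z :: "'a poly \<times> 'a fps \<times> 'a fps"
  assume "z \<in> dbeta_tgt d"
  then obtain q u w where z: "z = (q, u, w)" and q: "q \<in> Qd d" and u: "u dvd 1"
    by (auto simp: dbeta_tgt_def LGm_def)
  obtain a v where "a \<in> Ad d" "w = u * fps_of_poly a + fps_of_poly q * v"
    using fps_unit_monic_division[OF assms q u rhom_id] by blast
  then have "(q, u, a, v) \<in> dbeta_src d" "dbeta (q, u, a, v) = z"
    using z q u by (simp_all add: dbeta_src_def LGm_def dbeta_def)
  then show "z \<in> dbeta ` dbeta_src d" by (metis image_eqI)
qed

lemma alpha_tgt_subset_image:
  assumes "nonunits_nilpotent TYPE('a::comm_ring_1)"
  shows "(alpha_tgt d :: ('a poly \<times> 'a fps) set) \<subseteq> alpha ` alpha_src d"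
proof
  fix z :: "'a poly \<times> 'a fps"
  assume "z \<in> alpha_tgt d"
  then obtain q w where z: "z = (q, w)" and q: "q \<in> Qd d"
    by (auto simp: alpha_tgt_def)
  obtain a v where "a \<in> Ad d" "w = 1 * fps_of_poly a + fps_of_poly q * v"
    using fps_unit_monic_division[OF assms q one_dvd rhom_id] by blast
  then have "(q, a, v) \<in> alpha_src d" "alpha (q, a, v) = z"
    using z q by (simp_all add: alpha_src_def alpha_def add.commute)
  then show "z \<in> alpha ` alpha_src d" by (metis image_eqI)
qed

lemma inj_on_dbeta: "inj_on dbeta (distinguished_poly d \<times> LGm \<times> Ad d \<times> UNIV)"
proof (rule inj_onI)
  fix y1 y2
  assume "y1 \<in> distinguished_poly d \<times> LGm \<times> Ad d \<times> UNIV"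
    and "y2 \<in> distinguished_poly d \<times> LGm \<times> Ad d \<times> UNIV" and "dbeta y1 = dbeta y2"
  then obtain q u a1 v1 a2 v2 where y: "y1 = (q, u, a1, v1)" "y2 = (q, u, a2, v2)"
    and q: "q \<in> distinguished_poly d" and u: "u dvd 1" and a: "a1 \<in> Ad d" "a2 \<in> Ad d"
    and e: "u * fps_of_poly a1 + fps_of_poly q * v1 = u * fps_of_poly a2 + fps_of_poly q * v2"
    by (cases y1, cases y2) (auto simp: dbeta_def LGm_def)
  have "a1 = a2 \<and> v1 = v2" using fps_unit_distinguished_division_unique[OF q u a e] .
  then show "y1 = y2" using y by simp
qed

lemma inj_on_alpha: "inj_on alpha (distinguished_poly d \<times> Ad d \<times> UNIV)"
proof (rule inj_onI)
  fix y1 y2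
  assume "y1 \<in> distinguished_poly d \<times> Ad d \<times> UNIV"
    and "y2 \<in> distinguished_poly d \<times> Ad d \<times> UNIV" and "alpha y1 = alpha y2"
  then obtain q a1 v1 a2 v2 where y: "y1 = (q, a1, v1)" "y2 = (q, a2, v2)"
    and q: "q \<in> distinguished_poly d" and a: "a1 \<in> Ad d" "a2 \<in> Ad d"
    and e: "1 * fps_of_poly a1 + fps_of_poly q * v1 = 1 * fps_of_poly a2 + fps_of_poly q * v2"
    by (cases y1, cases y2) (auto simp: alpha_def add.commute)
  have "a1 = a2 \<and> v1 = v2" using fps_unit_distinguished_division_unique[OF q one_dvd a e] .
  then show "y1 = y2" using y by simp
qed

lemma dbeta_lift:
  fixes g :: "'a::comm_ring_1 \<Rightarrow> 'b::comm_ring_1"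
  assumes nu: "nonunits_nilpotent TYPE('a)" and g: "is_rhom g" "surj g"
    and y': "y' \<in> dbeta_src d" and z: "z \<in> dbeta_tgt d" and e: "dbeta y' = bc_dbeta_tgt g z"
  shows "\<exists>y\<in>dbeta_src d. bc_dbeta_src g y = y' \<and> dbeta y = z"
proof -
  obtain q u w where z': "z = (q, u, w)" and q: "q \<in> Qd d" and u: "u dvd 1"
    using z by (auto simp: dbeta_tgt_def LGm_def)
  obtain a' v' where y'': "y' = (map_poly g q, fps_map g u, a', v')" and a': "a' \<in> Ad d"
    and w: "fps_map g w = fps_map g u * fps_of_poly a' + fps_of_poly (map_poly g q) * v'"
    using y' e z' by (cases y') (auto simp: dbeta_def dbeta_src_def bc_dbeta_tgt_def)
  obtain a v where "a \<in> Ad d" "map_poly g a = a'" "fps_map g v = v'"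
    "w = u * fps_of_poly a + fps_of_poly q * v"
    using fps_unit_monic_division_lift[OF nu g q u a' w] by blast
  then show ?thesis
    using z' y'' q u
    by (intro bexI[of _ "(q, u, a, v)"]) (auto simp: dbeta_def dbeta_src_def LGm_def bc_dbeta_src_def)
qed

lemma alpha_lift:
  fixes g :: "'a::comm_ring_1 \<Rightarrow> 'b::comm_ring_1"
  assumes nu: "nonunits_nilpotent TYPE('a)" and g: "is_rhom g" "surj g"
    and y': "y' \<in> alpha_src d" and z: "z \<in> alpha_tgt d" and e: "alpha y' = bc_alpha_tgt g z"
  shows "\<exists>y\<in>alpha_src d. bc_alpha_src g y = y' \<and> alpha y = z"
proof -
  obtain q w where z': "z = (q, w)" and q: "q \<in> Qd d"
    using z by (auto simp: alpha_tgt_def)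
  obtain a' v' where y'': "y' = (map_poly g q, a', v')" and a': "a' \<in> Ad d"
    and w: "fps_map g w = fps_map g 1 * fps_of_poly a' + fps_of_poly (map_poly g q) * v'"
    using y' e z' g(1) by (cases y') (auto simp: alpha_def alpha_src_def bc_alpha_tgt_def fps_map_1 add.commute)
  obtain a v where "a \<in> Ad d" "map_poly g a = a'" "fps_map g v = v'"
    "w = 1 * fps_of_poly a + fps_of_poly q * v"
    using fps_unit_monic_division_lift[OF nu g q one_dvd a' w] by blast
  then show ?thesis
    using z' y'' q
    by (intro bexI[of _ "(q, a, v)"]) (auto simp: alpha_def alpha_src_def bc_alpha_src_def)
qed

lemma dbeta_lifts:
  fixes \<phi> :: "'k::field \<Rightarrow> 'r::comm_ring_1" and \<phi>' :: "'k \<Rightarrow> 's::comm_ring_1"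
  assumes A: "art_k \<phi> \<pi>" and A': "art_k \<phi>' \<pi>'" and H: "art_hom \<phi> \<pi> \<phi>' \<pi>' g"
    and "surj g"
  shows "lifts (dbeta_src d) (dbeta_src d) (dbeta_tgt d) (bc_dbeta_src \<pi>) (bc_dbeta_src \<pi>')
           (bc_dbeta_tgt \<pi>) (bc_dbeta_src g) (bc_dbeta_tgt g) dbeta dbeta dbeta x"
proof (rule liftsI)
  have g: "is_rhom g" "\<pi>' \<circ> g = \<pi>" using H by (auto simp: art_hom_def)
  show "\<exists>y\<in>dbeta_src d. bc_dbeta_src g y = y' \<and> dbeta y = z"
    if "y' \<in> dbeta_src d" "z \<in> dbeta_tgt d" "dbeta y' = bc_dbeta_tgt g z" for y' z
    using dbeta_lift[OF art_k_nonunits_nilpotent[OF A] g(1) \<open>surj g\<close> that] .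
  show "bc_dbeta_src \<pi> y = bc_dbeta_src \<pi>' (bc_dbeta_src g y)" for y
    using rhom_0[OF art_k_rhom[OF A']] rhom_0[OF g(1)] by (simp add: bc_dbeta_src_comp g(2))
qed

lemma alpha_lifts:
  fixes \<phi> :: "'k::field \<Rightarrow> 'r::comm_ring_1" and \<phi>' :: "'k \<Rightarrow> 's::comm_ring_1"
  assumes A: "art_k \<phi> \<pi>" and A': "art_k \<phi>' \<pi>'" and H: "art_hom \<phi> \<pi> \<phi>' \<pi>' g"
    and "surj g"
  shows "lifts (alpha_src d) (alpha_src d) (alpha_tgt d) (bc_alpha_src \<pi>) (bc_alpha_src \<pi>')
           (bc_alpha_tgt \<pi>) (bc_alpha_src g) (bc_alpha_tgt g) alpha alpha alpha x"
proof (rule liftsI)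
  have g: "is_rhom g" "\<pi>' \<circ> g = \<pi>" using H by (auto simp: art_hom_def)
  show "\<exists>y\<in>alpha_src d. bc_alpha_src g y = y' \<and> alpha y = z"
    if "y' \<in> alpha_src d" "z \<in> alpha_tgt d" "alpha y' = bc_alpha_tgt g z" for y' z
    using alpha_lift[OF art_k_nonunits_nilpotent[OF A] g(1) \<open>surj g\<close> that] .
  show "bc_alpha_src \<pi> y = bc_alpha_src \<pi>' (bc_alpha_src g y)" for y
    using rhom_0[OF art_k_rhom[OF A']] rhom_0[OF g(1)] by (simp add: bc_alpha_src_comp g(2))
qed

lemma dbeta_fibre_bij:
  fixes \<phi> :: "'k::field \<Rightarrow> 'r::comm_ring_1"
  assumes A: "art_k \<phi> \<pi>" and x: "x \<in> dbeta_src d" and x_fst: "fst x = monom 1 d"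
  shows "bij_betw dbeta {y \<in> dbeta_src d. bc_dbeta_src \<pi> y = x}
           {z \<in> dbeta_tgt d. bc_dbeta_tgt \<pi> z = dbeta x}"
proof (rule bij_betw_fibres)
  have \<pi>: "is_rhom \<pi>" "\<pi> 0 = 0" using art_k_rhom[OF A] by (auto intro: rhom_0)
  show "dbeta ` dbeta_src d \<subseteq> dbeta_tgt d" by (rule dbeta_image_subset)
  show "dbeta_tgt d \<subseteq> dbeta ` (dbeta_src d :: ('r poly \<times> 'r fps \<times> 'r poly \<times> 'r fps) set)"
    using dbeta_tgt_subset_image art_k_nonunits_nilpotent[OF A] by blast
  show "bc_dbeta_tgt \<pi> (dbeta y) = dbeta (bc_dbeta_src \<pi> y)" for y
    by (rule bc_dbeta_tgt_dbeta[OF \<pi>(1)])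
  have "{y \<in> dbeta_src d. bc_dbeta_src \<pi> y = x} \<subseteq> distinguished_poly d \<times> LGm \<times> Ad d \<times> UNIV"
    using x_fst art_k_distinguished_poly[OF A]
    by (auto simp: dbeta_src_def bc_dbeta_src_def)
  then show "inj_on dbeta {y \<in> dbeta_src d. bc_dbeta_src \<pi> y = x}"
    by (rule inj_on_subset[OF inj_on_dbeta])
  show "bc_dbeta_src \<pi> y = x" if "y \<in> dbeta_src d" "dbeta (bc_dbeta_src \<pi> y) = dbeta x" for y
  proof (rule inj_onD[OF inj_on_dbeta that(2)])
    have "fst (bc_dbeta_src \<pi> y) = monom 1 d"
      using arg_cong[OF that(2), of fst] x_fst by simp
    then show "bc_dbeta_src \<pi> y \<in> distinguished_poly d \<times> LGm \<times> Ad d \<times> UNIV"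
      using that(1) \<pi> monom_1_distinguished_poly
      by (cases y) (auto simp: dbeta_src_def bc_dbeta_src_def LGm_def map_poly_Ad fps_map_unit
          simp del: fps_is_unit_iff)
    show "x \<in> distinguished_poly d \<times> LGm \<times> Ad d \<times> UNIV"
      using x x_fst monom_1_distinguished_poly by (cases x) (auto simp: dbeta_src_def)
  qed
qed

lemma alpha_fibre_bij:
  fixes \<phi> :: "'k::field \<Rightarrow> 'r::comm_ring_1"
  assumes A: "art_k \<phi> \<pi>" and x: "x \<in> alpha_src d" and x_fst: "fst x = monom 1 d"
  shows "bij_betw alpha {y \<in> alpha_src d. bc_alpha_src \<pi> y = x}
           {z \<in> alpha_tgt d. bc_alpha_tgt \<pi> z = alpha x}"
proof (rule bij_betw_fibres)
  have \<pi>: "is_rhom \<pi>" "\<pi> 0 = 0" using art_k_rhom[OF A] by (auto intro: rhom_0)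
  show "alpha ` alpha_src d \<subseteq> alpha_tgt d" by (rule alpha_image_subset)
  show "alpha_tgt d \<subseteq> alpha ` (alpha_src d :: ('r poly \<times> 'r poly \<times> 'r fps) set)"
    using alpha_tgt_subset_image art_k_nonunits_nilpotent[OF A] by blast
  show "bc_alpha_tgt \<pi> (alpha y) = alpha (bc_alpha_src \<pi> y)" for y
    by (rule bc_alpha_tgt_alpha[OF \<pi>(1)])
  have "{y \<in> alpha_src d. bc_alpha_src \<pi> y = x} \<subseteq> distinguished_poly d \<times> Ad d \<times> UNIV"
    using x_fst art_k_distinguished_poly[OF A]
    by (auto simp: alpha_src_def bc_alpha_src_def)
  then show "inj_on alpha {y \<in> alpha_src d. bc_alpha_src \<pi> y = x}"
    by (rule inj_on_subset[OF inj_on_alpha])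
  show "bc_alpha_src \<pi> y = x" if "y \<in> alpha_src d" "alpha (bc_alpha_src \<pi> y) = alpha x" for y
  proof (rule inj_onD[OF inj_on_alpha that(2)])
    have "fst (bc_alpha_src \<pi> y) = monom 1 d"
      using arg_cong[OF that(2), of fst] x_fst by simp
    then show "bc_alpha_src \<pi> y \<in> distinguished_poly d \<times> Ad d \<times> UNIV"
      using that(1) \<pi> monom_1_distinguished_poly
      by (cases y) (auto simp: alpha_src_def bc_alpha_src_def map_poly_Ad)
    show "x \<in> distinguished_poly d \<times> Ad d \<times> UNIV"
      using x x_fst monom_1_distinguished_poly by (cases x) (auto simp: alpha_src_def)
  qed
qed

theorem proposition4p1:
  fixes d :: nat
  shows "(\<forall>z \<in> (dbeta_tgt d :: ('k::field poly \<times> 'k fps \<times> 'k fps) set).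
            \<exists>x \<in> dbeta_src d. dbeta x = z)
       \<and> (\<forall>z \<in> (alpha_tgt d :: ('k poly \<times> 'k fps) set). \<exists>x \<in> alpha_src d. alpha x = z)
       \<and> (\<forall>(\<phi> :: 'k \<Rightarrow> 'r::comm_ring_1) \<pi> (\<phi>' :: 'k \<Rightarrow> 's::comm_ring_1) \<pi>' g.
            art_k \<phi> \<pi> \<and> art_k \<phi>' \<pi>' \<and> art_hom \<phi> \<pi> \<phi>' \<pi>' g \<and> surj g \<longrightarrow>
            (\<forall>x \<in> dbeta_src d.
               lifts (dbeta_src d) (dbeta_src d) (dbeta_tgt d)
                 (bc_dbeta_src \<pi>) (bc_dbeta_src \<pi>') (bc_dbeta_tgt \<pi>)
                 (bc_dbeta_src g) (bc_dbeta_tgt g) dbeta dbeta dbeta x)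
          \<and> (\<forall>x \<in> alpha_src d.
               lifts (alpha_src d) (alpha_src d) (alpha_tgt d)
                 (bc_alpha_src \<pi>) (bc_alpha_src \<pi>') (bc_alpha_tgt \<pi>)
                 (bc_alpha_src g) (bc_alpha_tgt g) alpha alpha alpha x))
       \<and> (\<forall>(\<phi> :: 'k \<Rightarrow> 'r) \<pi>. art_k \<phi> \<pi> \<longrightarrow>
            (\<forall>x \<in> dbeta_src d. fst x = monom 1 d \<longrightarrow>
               bij_betw dbeta {y \<in> dbeta_src d. bc_dbeta_src \<pi> y = x}
                              {z \<in> dbeta_tgt d. bc_dbeta_tgt \<pi> z = dbeta x})
          \<and> (\<forall>x \<in> alpha_src d. fst x = monom 1 d \<longrightarrow>
               bij_betw alpha {y \<in> alpha_src d. bc_alpha_src \<pi> y = x}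
                              {z \<in> alpha_tgt d. bc_alpha_tgt \<pi> z = alpha x}))"
proof -
  have "dbeta_tgt d \<subseteq> dbeta ` (dbeta_src d :: ('k poly \<times> 'k fps \<times> 'k poly \<times> 'k fps) set)"
    "alpha_tgt d \<subseteq> alpha ` (alpha_src d :: ('k poly \<times> 'k poly \<times> 'k fps) set)"
    using dbeta_tgt_subset_image alpha_tgt_subset_image field_nonunits_nilpotent by blast+
  then show ?thesis
    by (blast intro: dbeta_lifts alpha_lifts dbeta_fibre_bij alpha_fibre_bij)
qed

end
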